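(* For every $\tau>1/2$ there is a constant $C>0$ such that for every $\gamma>0$, $$\mathrm{meas}\big(\mathfrak Q\setminus\mathfrak D(\gamma,\tau)\big)\le C\gamma.$$
   Context: $\mathfrak Q=\{\omega\in\mathbb R^{\mathbb Z}:|\omega_j-j^2|\le1/2\ \forall j\}=\prod_j[j^2-1/2,j^2+1/2]$, endowed with the product probability measure $\mathrm{meas}$ of the normalized Lebesgue measures on each factor. $\langle i\rangle=\max\{1,|i|\}$; $\mathbb Z^{\mathbb Z}_f$ = finitely supported integer sequences; $\mathfrak D(\gamma,\tau)=\{\omega\in\mathfrak Q:|\omega\cdot\nu|>\gamma\prod_i(1+\langle i\rangle^2|\nu_i|^2)^{-\tau}\ \forall\nu\in\mathbb Z^{\mathbb Z}_f\setminus\{0\}\}$, where $\omega\cdot\nu=\sum_i\omega_i\nu_i$. *)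

theory Defs
  imports "HOL-Probability.Probability"
begin

definition Qcube :: "(int \<Rightarrow> real) set" where
  "Qcube = {\<omega>. \<forall>j. \<bar>\<omega> j - (real_of_int j)^2\<bar> \<le> 1/2}"

definition meas :: "(int \<Rightarrow> real) measure" where
  "meas = (\<Pi>\<^sub>M j\<in>(UNIV::int set).
             uniform_measure lborel {(real_of_int j)^2 - 1/2 .. (real_of_int j)^2 + 1/2})"

definition jbr :: "int \<Rightarrow> real" where
  "jbr i = max 1 \<bar>real_of_int i\<bar>"

definition fin_supp :: "(int \<Rightarrow> int) \<Rightarrow> bool" where
  "fin_supp \<nu> \<longleftrightarrow> finite {i. \<nu> i \<noteq> 0}"

definition dotp :: "(int \<Rightarrow> real) \<Rightarrow> (int \<Rightarrow> int) \<Rightarrow> real" where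
  "dotp \<omega> \<nu> = (\<Sum>i\<in>{i. \<nu> i \<noteq> 0}. \<omega> i * real_of_int (\<nu> i))"

text \<open>prod_i (1 + <i>^2 |nu_i|^2)^(-tau); factors with nu_i = 0 equal 1.\<close>
definition wgt :: "real \<Rightarrow> (int \<Rightarrow> int) \<Rightarrow> real" where
  "wgt \<tau> \<nu> = (\<Prod>i\<in>{i. \<nu> i \<noteq> 0}.
      (1 + (jbr i)^2 * (real_of_int \<bar>\<nu> i\<bar>)^2) powr (-\<tau>))"

definition Dset :: "real \<Rightarrow> real \<Rightarrow> (int \<Rightarrow> real) set" where
  "Dset \<gamma> \<tau> = {\<omega> \<in> Qcube. \<forall>\<nu>. fin_supp \<nu> \<and> (\<exists>i. \<nu> i \<noteq> 0) \<longrightarrow>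
      \<bar>dotp \<omega> \<nu>\<bar> > \<gamma> * wgt \<tau> \<nu>}"

end

theory Submission
  imports Defs
begin

text \<open>
  For a single \<open>\<nu> \<noteq> 0\<close> the slab \<open>{\<omega>. \<bar>\<omega> \<cdot> \<nu>\<bar> \<le> \<delta>}\<close> has measure at most \<open>2 \<delta>\<close>:
  integrate first over a coordinate \<open>\<omega> i\<close> with \<open>\<nu> i \<noteq> 0\<close>; as \<open>\<omega> i\<close> runs through its
  interval of length one, \<open>\<omega> \<cdot> \<nu>\<close> moves with speed \<open>\<bar>\<nu> i\<bar> \<ge> 1\<close>.
  With \<open>\<delta> = \<gamma> * wgt \<tau> \<nu>\<close> it remains to bound the total weight. On the box of \<open>\<nu>\<close> with
  support and entries in \<open>[-N, N]\<close> the weights factorise over the coordinates, and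
  \<open>\<Sum>n. (1 + \<langle>i\<rangle>\<^sup>2 n\<^sup>2) powr -\<tau> \<le> 1 + 2 \<zeta>(2\<tau>) \<langle>i\<rangle> powr -2\<tau> \<le> exp (2 \<zeta>(2\<tau>) \<langle>i\<rangle> powr -2\<tau>)\<close>,
  so since \<open>2\<tau> > 1\<close> the product over \<open>i\<close> is at most \<open>exp (2 \<zeta>(2\<tau>) (1 + 2 \<zeta>(2\<tau>)))\<close>
  uniformly in \<open>N\<close>. The boxes increase and exhaust all finitely supported \<open>\<nu>\<close>.
\<close>

lemma slab_eq_interval:
  fixes a c \<delta> :: real
  assumes "a \<noteq> 0"
  shows "{y. \<bar>y * a + c\<bar> \<le> \<delta>} = {-c/a - \<delta>/\<bar>a\<bar> .. -c/a + \<delta>/\<bar>a\<bar>}"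
proof -
  have eq: "\<bar>y * a + c\<bar> = \<bar>a\<bar> * \<bar>y + c/a\<bar>" for y
  proof -
    have "y * a + c = a * (y + c/a)" using assms by (simp add: field_simps)
    then show ?thesis by (simp only: abs_mult)
  qed
  have "\<bar>y * a + c\<bar> \<le> \<delta> \<longleftrightarrow> \<bar>y + c/a\<bar> \<le> \<delta>/\<bar>a\<bar>" for y
    unfolding eq using assms by (simp add: pos_le_divide_eq mult.commute)
  then show ?thesis by fastforce
qed

lemma emeasure_lborel_slab:
  fixes a c \<delta> :: real
  assumes "a \<noteq> 0" "\<delta> \<ge> 0"
  shows "emeasure lborel {y. \<bar>y * a + c\<bar> \<le> \<delta>} = ennreal (2 * \<delta> / \<bar>a\<bar>)"
  using assms by (simp add: slab_eq_interval)

lemma emeasure_uniform_measure_le: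
  assumes "A \<in> sets M" "B \<in> sets M" "emeasure M A = 1"
  shows "emeasure (uniform_measure M A) B \<le> emeasure M B"
  using assms by (simp add: divide_ennreal_def emeasure_mono)

lemma product_prob_spaceI: "(\<And>i. prob_space (M i)) \<Longrightarrow> product_prob_space M"
  unfolding product_prob_space_def product_prob_space_axioms_def product_sigma_finite_def
  using prob_space_imp_sigma_finite by blast

lemma linear_slab_measurable:
  fixes M :: "'i \<Rightarrow> real measure" and a :: "'i \<Rightarrow> real"
  assumes borel: "\<And>i. sets (M i) = sets borel" and "finite S"
  shows "{x \<in> space (PiM S M). \<bar>\<Sum>i\<in>S. x i * a i\<bar> \<le> \<delta>} \<in> sets (PiM S M)"
proof -
  have [measurable]: "(\<lambda>x. x i) \<in> borel_measurable (PiM S M)" if "i \<in> S" for i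
    using measurable_component_singleton[OF that, of M] measurable_cong_sets[OF refl borel] by blast
  show ?thesis
    by measurable
qed

lemma emeasure_PiM_finite_linear_slab_le:
  fixes M :: "'i \<Rightarrow> real measure" and a :: "'i \<Rightarrow> real"
  assumes prob: "\<And>i. prob_space (M i)" and borel: "\<And>i. sets (M i) = sets borel"
    and S: "finite S" "i0 \<in> S"
    and slab: "\<And>c. emeasure (M i0) {y. \<bar>y * a i0 + c\<bar> \<le> \<delta>} \<le> \<epsilon>"
  shows "emeasure (PiM S M) {x \<in> space (PiM S M). \<bar>\<Sum>i\<in>S. x i * a i\<bar> \<le> \<delta>} \<le> \<epsilon>"
proof -
  interpret product_prob_space M S
    using prob by (rule product_prob_spaceI)
  have space: "space (M i) = UNIV" for i
    using sets_eq_imp_space_eq[OF borel] by simp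
  define B where "B = {x \<in> space (PiM S M). \<bar>\<Sum>i\<in>S. x i * a i\<bar> \<le> \<delta>}"
  define T where "T = S - {i0}"
  have ST: "S = insert i0 T" "i0 \<notin> T" "finite T"
    using S unfolding T_def by auto
  have B: "B \<in> sets (PiM S M)"
    unfolding B_def using borel S(1) by (rule linear_slab_measurable)
  have "emeasure (PiM S M) B = (\<integral>\<^sup>+x. indicator B x \<partial>PiM S M)"
    using B by simp
  also have "\<dots> = (\<integral>\<^sup>+x. (\<integral>\<^sup>+y. indicator B (x(i0 := y)) \<partial>M i0) \<partial>PiM T M)"
    unfolding ST(1) by (rule product_nn_integral_insert) (use ST B in auto)
  also have "\<dots> \<le> (\<integral>\<^sup>+x. \<epsilon> \<partial>PiM T M)"
  proof (rule nn_integral_mono)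
    fix x assume x: "x \<in> space (PiM T M)"
    define c where "c = (\<Sum>i\<in>T. x i * a i)"
    have "indicator B (x(i0 := y)) = (indicator {y. \<bar>y * a i0 + c\<bar> \<le> \<delta>} y :: ennreal)" for y
    proof -
      have "x(i0 := y) \<in> space (PiM S M)"
        using x ST by (auto simp: space_PiM space PiE_iff)
      moreover have "(\<Sum>i\<in>S. (x(i0 := y)) i * a i) = y * a i0 + c"
        unfolding ST(1) c_def using ST by (auto intro!: sum.cong)
      ultimately show ?thesis unfolding B_def by (simp add: indicator_def)
    qed
    then have "(\<integral>\<^sup>+y. indicator B (x(i0 := y)) \<partial>M i0) = emeasure (M i0) {y. \<bar>y * a i0 + c\<bar> \<le> \<delta>}"
      using borel by (simp add: nn_integral_indicator del: indicator_simps)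
    with slab show "(\<integral>\<^sup>+y. indicator B (x(i0 := y)) \<partial>M i0) \<le> \<epsilon>" by simp
  qed
  also have "\<dots> = \<epsilon>"
    using prob_space.emeasure_space_1[OF prob_space_PiM[OF prob], of T] by simp
  finally show ?thesis
    unfolding B_def .
qed

lemma emeasure_PiM_linear_slab_le:
  fixes M :: "'i \<Rightarrow> real measure" and a :: "'i \<Rightarrow> real"
  assumes prob: "\<And>i. prob_space (M i)" and borel: "\<And>i. sets (M i) = sets borel"
    and S: "finite S" "S \<subseteq> I" "i0 \<in> S"
    and slab: "\<And>c. emeasure (M i0) {y. \<bar>y * a i0 + c\<bar> \<le> \<delta>} \<le> \<epsilon>"
  shows "emeasure (PiM I M) {\<omega> \<in> space (PiM I M). \<bar>\<Sum>i\<in>S. \<omega> i * a i\<bar> \<le> \<delta>} \<le> \<epsilon>"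
proof -
  interpret product_prob_space M I
    using prob by (rule product_prob_spaceI)
  let ?B = "{x \<in> space (PiM S M). \<bar>\<Sum>i\<in>S. x i * a i\<bar> \<le> \<delta>}"
  have "(\<Sum>i\<in>S. restrict \<omega> S i * a i) = (\<Sum>i\<in>S. \<omega> i * a i)" for \<omega> :: "'i \<Rightarrow> real"
    by (rule sum.cong) auto
  then have "{\<omega> \<in> space (PiM I M). \<bar>\<Sum>i\<in>S. \<omega> i * a i\<bar> \<le> \<delta>} = prod_emb I M S ?B"
    using sets_eq_imp_space_eq[OF borel] by (auto simp: prod_emb_iff space_PiM PiE_def)
  also have "emeasure (PiM I M) \<dots> = emeasure (PiM S M) ?B"
    using S borel by (intro emeasure_PiM_emb' linear_slab_measurable) auto
  also have "\<dots> \<le> \<epsilon>"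
    using prob borel S(1,3) slab by (rule emeasure_PiM_finite_linear_slab_le)
  finally show ?thesis .
qed

lemma (in finite_measure) measure_UN_incseq_le:
  assumes "range A \<subseteq> sets M" "incseq A" "\<And>n. measure M (A n) \<le> c"
  shows "measure M (\<Union>n. A n) \<le> c"
  using LIMSEQ_le_const2[OF finite_Lim_measure_incseq[OF assms(1,2)]] assms(3) by blast

definition supported_functions :: "'i set \<Rightarrow> 'b set \<Rightarrow> ('i \<Rightarrow> 'b::zero) set" where
  "supported_functions I V = {\<nu>. \<forall>i. (i \<in> I \<longrightarrow> \<nu> i \<in> V) \<and> (i \<notin> I \<longrightarrow> \<nu> i = 0)}"

lemma supported_functions_eq_image_PiE:
  "supported_functions I V = (\<lambda>f i. if i \<in> I then f i else 0) ` PiE I (\<lambda>_. V)"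
proof (intro equalityI subsetI)
  fix \<nu> assume "\<nu> \<in> supported_functions I V"
  then have "\<nu> = (\<lambda>i. if i \<in> I then restrict \<nu> I i else 0)" and "restrict \<nu> I \<in> PiE I (\<lambda>_. V)"
    by (auto simp: supported_functions_def)
  then show "\<nu> \<in> (\<lambda>f i. if i \<in> I then f i else 0) ` PiE I (\<lambda>_. V)"
    by blast
qed (auto simp: supported_functions_def)

lemma inj_on_extend_by_zero:
  "inj_on (\<lambda>f i. if i \<in> I then f i else 0) (PiE I (\<lambda>_. V))"
proof (rule inj_onI)
  fix f g :: "'a \<Rightarrow> 'b::zero"
  assume f: "f \<in> PiE I (\<lambda>_. V)" and g: "g \<in> PiE I (\<lambda>_. V)"
    and eq: "(\<lambda>i. if i \<in> I then f i else 0) = (\<lambda>i. if i \<in> I then g i else 0)"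
  show "f = g"
  proof (rule PiE_ext[OF f g])
    fix i assume "i \<in> I"
    with fun_cong[OF eq, of i] show "f i = g i" by simp
  qed
qed

lemma finite_supported_functions:
  "finite I \<Longrightarrow> finite V \<Longrightarrow> finite (supported_functions I V)"
  unfolding supported_functions_eq_image_PiE by (intro finite_imageI finite_PiE)

lemma supported_functions_mono:
  assumes "I \<subseteq> J" "V \<subseteq> W" "0 \<in> W"
  shows "supported_functions I V \<subseteq> supported_functions J W"
proof
  fix \<nu> assume \<nu>: "\<nu> \<in> supported_functions I V"
  have "\<nu> i \<in> W \<and> (i \<notin> J \<longrightarrow> \<nu> i = 0)" for i
    using \<nu> assms by (cases "i \<in> I") (auto simp: supported_functions_def)
  then show "\<nu> \<in> supported_functions J W"
    unfolding supported_functions_def by blast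
qed

lemma sum_prod_supported_functions:
  fixes h :: "'i \<Rightarrow> 'b::zero \<Rightarrow> 'c::comm_semiring_1"
  assumes "finite I" "finite V"
  shows "(\<Sum>\<nu>\<in>supported_functions I V. \<Prod>i\<in>I. h i (\<nu> i)) = (\<Prod>i\<in>I. \<Sum>v\<in>V. h i v)"
proof -
  have "(\<Sum>\<nu>\<in>supported_functions I V. \<Prod>i\<in>I. h i (\<nu> i))
      = (\<Sum>f\<in>PiE I (\<lambda>_. V). \<Prod>i\<in>I. h i (if i \<in> I then f i else 0))"
    unfolding supported_functions_eq_image_PiE by (simp add: sum.reindex[OF inj_on_extend_by_zero])
  also have "\<dots> = (\<Sum>f\<in>PiE I (\<lambda>_. V). \<Prod>i\<in>I. h i (f i))"
    by (intro sum.cong prod.cong) auto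
  also have "\<dots> = (\<Prod>i\<in>I. \<Sum>v\<in>V. h i v)"
    using assms by (simp add: prod_sum_PiE)
  finally show ?thesis .
qed

definition zeta_series :: "real \<Rightarrow> real" where
  "zeta_series s = (\<Sum>k. real (Suc k) powr (-s))"

lemma summable_zeta_series: "s > 1 \<Longrightarrow> summable (\<lambda>k. real (Suc k) powr (-s))"
  using summable_Suc_iff[of "\<lambda>k. real k powr (-s)"] by (simp add: summable_real_powr_iff)

lemma partial_sum_le_zeta_series: "s > 1 \<Longrightarrow> (\<Sum>k<N. real (Suc k) powr (-s)) \<le> zeta_series s"
  unfolding zeta_series_def by (rule sum_le_suminf[OF summable_zeta_series]) auto

lemma zeta_series_nonneg: "s > 1 \<Longrightarrow> zeta_series s \<ge> 0"
  unfolding zeta_series_def by (rule suminf_nonneg[OF summable_zeta_series]) auto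

definition Qfactor :: "int \<Rightarrow> real measure" where
  "Qfactor j = uniform_measure lborel {(real_of_int j)^2 - 1/2 .. (real_of_int j)^2 + 1/2}"

lemma meas_eq_PiM_Qfactor: "meas = PiM UNIV Qfactor"
  unfolding meas_def Qfactor_def ..

lemma prob_space_Qfactor: "prob_space (Qfactor j)"
  unfolding Qfactor_def by (rule prob_space_uniform_measure) auto

lemma sets_Qfactor [measurable_cong]: "sets (Qfactor j) = sets borel"
  unfolding Qfactor_def by simp

lemma emeasure_Qfactor_slab_le:
  fixes a c \<delta> :: real
  assumes "\<bar>a\<bar> \<ge> 1" "\<delta> \<ge> 0"
  shows "emeasure (Qfactor j) {y. \<bar>y * a + c\<bar> \<le> \<delta>} \<le> ennreal (2 * \<delta>)"
proof -
  have "emeasure (Qfactor j) {y. \<bar>y * a + c\<bar> \<le> \<delta>} \<le> emeasure lborel {y. \<bar>y * a + c\<bar> \<le> \<delta>}"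
    unfolding Qfactor_def by (rule emeasure_uniform_measure_le) auto
  also have "\<dots> = ennreal (2 * \<delta> / \<bar>a\<bar>)"
    using assms by (intro emeasure_lborel_slab) auto
  also have "\<dots> \<le> ennreal (2 * \<delta>)"
    using assms by (intro ennreal_leI) (simp add: divide_le_eq mult_le_cancel_left1)
  finally show ?thesis .
qed

lemma prob_space_meas: "prob_space meas"
  unfolding meas_eq_PiM_Qfactor by (rule prob_space_PiM) (rule prob_space_Qfactor)

lemma space_meas [simp]: "space meas = UNIV"
  unfolding meas_eq_PiM_Qfactor by (simp add: space_PiM sets_eq_imp_space_eq[OF sets_Qfactor])

lemma component_measurable_meas [measurable]: "(\<lambda>\<omega>. \<omega> i) \<in> borel_measurable meas"
  unfolding meas_eq_PiM_Qfactor
  using measurable_component_singleton[of i UNIV Qfactor] measurable_cong_sets[OF refl sets_Qfactor]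
  by blast

lemma dotp_measurable [measurable]: "(\<lambda>\<omega>. dotp \<omega> \<nu>) \<in> borel_measurable meas"
  unfolding dotp_def by measurable

lemma Qcube_measurable [measurable]: "Qcube \<in> sets meas"
proof -
  have "Qcube = {\<omega> \<in> space meas. \<forall>j. \<bar>\<omega> j - (real_of_int j)^2\<bar> \<le> 1/2}"
    by (simp add: Qcube_def)
  also have "\<dots> \<in> sets meas"
    by measurable
  finally show ?thesis .
qed

lemma measure_dotp_le:
  assumes "fin_supp \<nu>" "\<nu> i0 \<noteq> 0" "\<delta> \<ge> 0"
  shows "measure meas {\<omega>. \<bar>dotp \<omega> \<nu>\<bar> \<le> \<delta>} \<le> 2 * \<delta>"
proof -
  interpret prob_space meas by (rule prob_space_meas)
  have "emeasure (PiM UNIV Qfactor) {\<omega> \<in> space (PiM UNIV Qfactor).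
      \<bar>\<Sum>i\<in>{i. \<nu> i \<noteq> 0}. \<omega> i * real_of_int (\<nu> i)\<bar> \<le> \<delta>} \<le> ennreal (2 * \<delta>)"
    using assms prob_space_Qfactor sets_Qfactor emeasure_Qfactor_slab_le
    by (intro emeasure_PiM_linear_slab_le) (auto simp: fin_supp_def)
  then have "emeasure meas {\<omega>. \<bar>dotp \<omega> \<nu>\<bar> \<le> \<delta>} \<le> ennreal (2 * \<delta>)"
    by (simp add: meas_eq_PiM_Qfactor[symmetric] dotp_def)
  with assms(3) show ?thesis
    by (simp add: emeasure_eq_measure ennreal_le_iff)
qed

definition box :: "nat \<Rightarrow> (int \<Rightarrow> int) set" where
  "box N = supported_functions {-int N..int N} {-int N..int N}"

lemma finite_box: "finite (box N)"
  unfolding box_def by (intro finite_supported_functions) auto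

lemma box_mono: "mono box"
proof (rule monoI)
  fix N M :: nat
  assume "N \<le> M"
  then show "box N \<subseteq> box M"
    unfolding box_def by (intro supported_functions_mono) auto
qed

lemma fin_supp_iff_in_box: "fin_supp \<nu> \<longleftrightarrow> (\<exists>N. \<nu> \<in> box N)"
proof
  assume "fin_supp \<nu>"
  then have fin: "finite {i. \<nu> i \<noteq> 0}"
    unfolding fin_supp_def .
  define N where "N = nat (\<Sum>i\<in>{i. \<nu> i \<noteq> 0}. \<bar>i\<bar> + \<bar>\<nu> i\<bar>)"
  have bound: "\<bar>i\<bar> \<le> int N \<and> \<bar>\<nu> i\<bar> \<le> int N" if "\<nu> i \<noteq> 0" for i
    using member_le_sum[of i "{i. \<nu> i \<noteq> 0}" "\<lambda>i. \<bar>i\<bar> + \<bar>\<nu> i\<bar>"] fin that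
    unfolding N_def by auto
  have "\<nu> i \<in> {-int N..int N} \<and> (i \<notin> {-int N..int N} \<longrightarrow> \<nu> i = 0)" for i
    using bound[of i] by (cases "\<nu> i = 0") (auto simp: abs_le_iff)
  then have "\<nu> \<in> box N"
    unfolding box_def supported_functions_def by blast
  then show "\<exists>N. \<nu> \<in> box N" ..
next
  assume "\<exists>N. \<nu> \<in> box N"
  then obtain N where "{i. \<nu> i \<noteq> 0} \<subseteq> {-int N..int N}"
    unfolding box_def supported_functions_def by blast
  then show "fin_supp \<nu>"
    unfolding fin_supp_def using finite_subset by blast
qed

lemma jbr_ge_1: "jbr i \<ge> 1"
  unfolding jbr_def by simp

lemma sum_jbr_powr_eq:
  "(\<Sum>n\<in>{-int N..int N}. jbr n powr (-s)) = 1 + 2 * (\<Sum>k<N. real (Suc k) powr (-s))"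
proof (induction N)
  case 0
  then show ?case by (simp add: jbr_def)
next
  case (Suc N)
  have "{-int (Suc N)..int (Suc N)} = insert (- int N - 1) (insert (int N + 1) {-int N..int N})"
    by auto
  moreover have "jbr (int N + 1) = real (Suc N)" "jbr (- int N - 1) = real (Suc N)"
    unfolding jbr_def by auto
  ultimately show ?case
    using Suc.IH by simp
qed

lemma sum_jbr_powr_le:
  "s > 1 \<Longrightarrow> (\<Sum>n\<in>{-int N..int N}. jbr n powr (-s)) \<le> 1 + 2 * zeta_series s"
  unfolding sum_jbr_powr_eq using partial_sum_le_zeta_series[of s N] by simp

definition wgt_factor :: "real \<Rightarrow> int \<Rightarrow> int \<Rightarrow> real" where
  "wgt_factor \<tau> i n = (1 + (jbr i)^2 * (real_of_int \<bar>n\<bar>)^2) powr (-\<tau>)"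

lemma wgt_factor_0 [simp]: "wgt_factor \<tau> i 0 = 1"
  unfolding wgt_factor_def by simp

lemma wgt_factor_le:
  assumes "n \<noteq> 0" "\<tau> \<ge> 0"
  shows "wgt_factor \<tau> i n \<le> jbr i powr (-2*\<tau>) * jbr n powr (-2*\<tau>)"
proof -
  have pos: "jbr i * jbr n > 0"
    using jbr_ge_1[of i] jbr_ge_1[of n] by (simp add: mult_pos_pos)
  have "wgt_factor \<tau> i n = (1 + (jbr i * jbr n)^2) powr (-\<tau>)"
    using assms(1) unfolding wgt_factor_def jbr_def by (simp add: power_mult_distrib)
  also have "\<dots> \<le> ((jbr i * jbr n)^2) powr (-\<tau>)"
    using pos assms(2) by (intro powr_mono2') auto
  also have "\<dots> = jbr i powr (-2*\<tau>) * jbr n powr (-2*\<tau>)"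
    using pos jbr_ge_1[of i] jbr_ge_1[of n]
    by (simp add: powr_powr powr_mult flip: powr_numeral)
  finally show ?thesis .
qed

lemma sum_wgt_factor_le:
  assumes "\<tau> > 1/2"
  shows "(\<Sum>n\<in>{-int N..int N}. wgt_factor \<tau> i n) \<le> 1 + 2 * zeta_series (2*\<tau>) * jbr i powr (-2*\<tau>)"
proof -
  let ?I = "{-int N..int N}"
  have "(\<Sum>n\<in>?I. wgt_factor \<tau> i n) = 1 + (\<Sum>n\<in>?I - {0}. wgt_factor \<tau> i n)"
    by (subst sum.remove[of _ 0]) auto
  also have "\<dots> \<le> 1 + (\<Sum>n\<in>?I - {0}. jbr i powr (-2*\<tau>) * jbr n powr (-2*\<tau>))"
    using assms by (intro add_left_mono sum_mono wgt_factor_le) auto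
  also have "\<dots> = 1 + jbr i powr (-2*\<tau>) * ((\<Sum>n\<in>?I. jbr n powr (-2*\<tau>)) - 1)"
    by (simp add: sum_distrib_left[symmetric] sum_diff1 jbr_def)
  also have "\<dots> \<le> 1 + jbr i powr (-2*\<tau>) * (2 * zeta_series (2*\<tau>))"
    using assms sum_jbr_powr_le[of "2*\<tau>" N] by (intro add_left_mono mult_left_mono) auto
  finally show ?thesis
    by (simp add: algebra_simps)
qed

lemma wgt_nonneg: "wgt \<tau> \<nu> \<ge> 0"
  unfolding wgt_def by (simp add: prod_nonneg)

lemma sum_wgt_box_le:
  assumes "\<tau> > 1/2"
  shows "(\<Sum>\<nu>\<in>box N. wgt \<tau> \<nu>) \<le> exp (2 * zeta_series (2*\<tau>) * (1 + 2 * zeta_series (2*\<tau>)))"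
proof -
  let ?I = "{-int N..int N}" and ?Z = "zeta_series (2*\<tau>)"
  have "wgt \<tau> \<nu> = (\<Prod>i\<in>?I. wgt_factor \<tau> i (\<nu> i))" if "\<nu> \<in> box N" for \<nu>
  proof -
    have "{i. \<nu> i \<noteq> 0} \<subseteq> ?I"
      using that unfolding box_def supported_functions_def by blast
    then show ?thesis
      unfolding wgt_def wgt_factor_def by (intro prod.mono_neutral_left) auto
  qed
  then have "(\<Sum>\<nu>\<in>box N. wgt \<tau> \<nu>) = (\<Prod>i\<in>?I. \<Sum>n\<in>?I. wgt_factor \<tau> i n)"
    unfolding box_def by (simp add: sum_prod_supported_functions cong: sum.cong)
  also have "\<dots> \<le> (\<Prod>i\<in>?I. exp (2 * ?Z * jbr i powr (-2*\<tau>)))"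
  proof (rule prod_mono)
    fix i
    have "(\<Sum>n\<in>?I. wgt_factor \<tau> i n) \<le> exp (2 * ?Z * jbr i powr (-2*\<tau>))"
      using sum_wgt_factor_le[OF assms] exp_ge_add_one_self order_trans by blast
    then show "0 \<le> (\<Sum>n\<in>?I. wgt_factor \<tau> i n) \<and> (\<Sum>n\<in>?I. wgt_factor \<tau> i n) \<le> exp (2 * ?Z * jbr i powr (-2*\<tau>))"
      by (auto simp: wgt_factor_def intro: sum_nonneg)
  qed
  also have "\<dots> = exp (2 * ?Z * (\<Sum>i\<in>?I. jbr i powr (-2*\<tau>)))"
    by (simp add: exp_sum sum_distrib_left)
  also have "\<dots> \<le> exp (2 * ?Z * (1 + 2 * ?Z))"
    using assms zeta_series_nonneg[of "2*\<tau>"] sum_jbr_powr_le[of "2*\<tau>" N] by (simp add: mult_left_mono)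
  finally show ?thesis .
qed

definition resonant_set :: "real \<Rightarrow> real \<Rightarrow> (int \<Rightarrow> int) \<Rightarrow> (int \<Rightarrow> real) set" where
  "resonant_set \<gamma> \<tau> \<nu> = {\<omega> \<in> Qcube. \<bar>dotp \<omega> \<nu>\<bar> \<le> \<gamma> * wgt \<tau> \<nu>}"

lemma Qcube_diff_Dset_eq_resonant_sets:
  "Qcube - Dset \<gamma> \<tau> = (\<Union>N. \<Union>\<nu>\<in>box N - {\<lambda>_. 0}. resonant_set \<gamma> \<tau> \<nu>)"
proof -
  have "(\<exists>i. \<nu> i \<noteq> 0) \<longleftrightarrow> \<nu> \<noteq> (\<lambda>_. 0)" for \<nu> :: "int \<Rightarrow> int"
    by auto
  then have "Dset \<gamma> \<tau> = {\<omega> \<in> Qcube. \<forall>N. \<forall>\<nu>\<in>box N - {\<lambda>_. 0}. \<not> \<bar>dotp \<omega> \<nu>\<bar> \<le> \<gamma> * wgt \<tau> \<nu>}"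
    unfolding Dset_def fin_supp_iff_in_box by (auto simp: not_le)
  then show ?thesis
    unfolding resonant_set_def by blast
qed

lemma resonant_set_measurable [measurable]: "resonant_set \<gamma> \<tau> \<nu> \<in> sets meas"
proof -
  have "resonant_set \<gamma> \<tau> \<nu> = Qcube \<inter> {\<omega> \<in> space meas. \<bar>dotp \<omega> \<nu>\<bar> \<le> \<gamma> * wgt \<tau> \<nu>}"
    unfolding resonant_set_def by auto
  also have "\<dots> \<in> sets meas"
    by measurable
  finally show ?thesis .
qed

lemma measure_resonant_set_le:
  assumes "fin_supp \<nu>" "\<nu> \<noteq> (\<lambda>_. 0)" "\<gamma> \<ge> 0"
  shows "measure meas (resonant_set \<gamma> \<tau> \<nu>) \<le> 2 * \<gamma> * wgt \<tau> \<nu>"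
proof -
  interpret prob_space meas by (rule prob_space_meas)
  obtain i0 where "\<nu> i0 \<noteq> 0"
    using assms(2) by auto
  have "{\<omega> \<in> space meas. \<bar>dotp \<omega> \<nu>\<bar> \<le> \<gamma> * wgt \<tau> \<nu>} \<in> sets meas"
    by measurable
  then have "measure meas (resonant_set \<gamma> \<tau> \<nu>) \<le> measure meas {\<omega>. \<bar>dotp \<omega> \<nu>\<bar> \<le> \<gamma> * wgt \<tau> \<nu>}"
    by (intro finite_measure_mono) (auto simp: resonant_set_def)
  also have "\<dots> \<le> 2 * (\<gamma> * wgt \<tau> \<nu>)"
    using assms \<open>\<nu> i0 \<noteq> 0\<close> wgt_nonneg by (intro measure_dotp_le) auto
  finally show ?thesis by simp
qed

lemma measure_box_resonances_le:
  assumes "\<tau> > 1/2" "\<gamma> \<ge> 0"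
  shows "measure meas (\<Union>\<nu>\<in>box N - {\<lambda>_. 0}. resonant_set \<gamma> \<tau> \<nu>)
           \<le> 2 * exp (2 * zeta_series (2*\<tau>) * (1 + 2 * zeta_series (2*\<tau>))) * \<gamma>"
proof -
  interpret prob_space meas by (rule prob_space_meas)
  have "measure meas (\<Union>\<nu>\<in>box N - {\<lambda>_. 0}. resonant_set \<gamma> \<tau> \<nu>)
      \<le> (\<Sum>\<nu>\<in>box N - {\<lambda>_. 0}. measure meas (resonant_set \<gamma> \<tau> \<nu>))"
    using finite_box by (intro finite_measure_subadditive_finite) auto
  also have "\<dots> \<le> (\<Sum>\<nu>\<in>box N. 2 * \<gamma> * wgt \<tau> \<nu>)"
  proof (rule order_trans[OF sum_mono sum_mono2])
    show "measure meas (resonant_set \<gamma> \<tau> \<nu>) \<le> 2 * \<gamma> * wgt \<tau> \<nu>" if "\<nu> \<in> box N - {\<lambda>_. 0}" for \<nu>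
      using that assms(2) by (intro measure_resonant_set_le) (auto simp: fin_supp_iff_in_box)
  qed (use finite_box assms(2) wgt_nonneg in auto)
  also have "\<dots> \<le> 2 * \<gamma> * exp (2 * zeta_series (2*\<tau>) * (1 + 2 * zeta_series (2*\<tau>)))"
    unfolding sum_distrib_left[symmetric]
    using assms by (intro mult_left_mono sum_wgt_box_le) auto
  finally show ?thesis
    by (simp add: ac_simps)
qed

theorem lemmaB3:
  fixes \<tau> :: real
  assumes "\<tau> > 1/2"
  shows "\<exists>C>0. \<forall>\<gamma>>0. Qcube - Dset \<gamma> \<tau> \<in> sets meas \<and>
           measure meas (Qcube - Dset \<gamma> \<tau>) \<le> C * \<gamma>"
proof (intro exI conjI allI impI)
  interpret prob_space meas by (rule prob_space_meas)
  let ?C = "2 * exp (2 * zeta_series (2*\<tau>) * (1 + 2 * zeta_series (2*\<tau>)))"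
  fix \<gamma> :: real assume "\<gamma> > 0"
  let ?R = "\<lambda>N. \<Union>\<nu>\<in>box N - {\<lambda>_. 0}. resonant_set \<gamma> \<tau> \<nu>"
  have sets: "range ?R \<subseteq> sets meas"
    using finite_box by auto
  have "incseq ?R"
  proof (rule monoI)
    fix m n :: nat
    assume "m \<le> n"
    with box_mono have "box m \<subseteq> box n"
      by (rule monoD)
    then show "?R m \<subseteq> ?R n"
      by blast
  qed
  then have "measure meas (\<Union>N. ?R N) \<le> ?C * \<gamma>"
    using measure_box_resonances_le[OF assms] \<open>\<gamma> > 0\<close> by (intro measure_UN_incseq_le[OF sets]) simp_all
  moreover have "(\<Union>N. ?R N) \<in> sets meas"
    using sets by blast
  ultimately show "Qcube - Dset \<gamma> \<tau> \<in> sets meas" "measure meas (Qcube - Dset \<gamma> \<tau>) \<le> ?C * \<gamma>"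
    by (simp_all add: Qcube_diff_Dset_eq_resonant_sets)
qed simp

end
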